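(* Let $f,f'\colon\mathbb F_2^{10}\to\mathbb F_2$ be given by $f(\mathbf x)=x_1x_6\oplus x_2x_7\oplus x_3x_8\oplus x_4x_9\oplus x_5x_{10}\oplus x_1x_2x_3x_4x_5$ and $f'(\mathbf x)=f(\mathbf x)\oplus x_4\oplus x_6\oplus x_8\oplus x_{10}\oplus x_1x_2\oplus x_2x_3\oplus x_1x_2x_3\oplus x_2x_4x_5\oplus x_1x_2x_4x_5\oplus x_2x_3x_4x_5$. Then $f$ and $f'$ are bent and not extended-affine equivalent, yet the translation designs $\operatorname{dev}(D_f)$ and $\operatorname{dev}(D_{f'})$ are isomorphic.
   Context: For a Boolean function $f$ on $\mathbb F_2^n$, $D_f=\{\mathbf x: f(\mathbf x)=1\}$, and $\operatorname{dev}(D_f)$ is the incidence structure with point set $\mathbb F_2^n$ and blocks $D_f+\mathbf g$, $\mathbf g\in\mathbb F_2^n$. Boolean functions $f,f'$ on $\mathbb F_2^n$ are EA-equivalent if $f=f'\circ A_2\oplus A_3$ for an affine permutation $A_2$ of $\mathbb F_2^n$ and an affine function $A_3$. A Boolean function is bent if all its Walsh coefficients $\sum_{\mathbf x}(-1)^{f(\mathbf x)\oplus\langle\mathbf a,\mathbf x\rangle}$ equal $\pm2^{n/2}$. Isomorphism of incidence structures: $M=PM'Q$ for permutation matrices $P,Q$ acting on incidence matrices. *)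

theory Defs
  imports "HOL-Analysis.Analysis" "HOL-Library.Z2" "HOL-Library.Numeral_Type"
begin

definition dotp :: "bit ^ 'n \<Rightarrow> bit ^ 'n \<Rightarrow> bit" where
  "dotp a x = (\<Sum>i\<in>UNIV. a $ i * x $ i)"

definition sgn_bit :: "bit \<Rightarrow> int" where
  "sgn_bit b = (if b = 0 then 1 else -1)"

definition walsh :: "(bit ^ 'n \<Rightarrow> bit) \<Rightarrow> bit ^ 'n \<Rightarrow> int" where
  "walsh f a = (\<Sum>x\<in>UNIV. sgn_bit (f x + dotp a x))"

definition bent :: "(bit ^ 'n \<Rightarrow> bit) \<Rightarrow> bool" where
  "bent f \<longleftrightarrow> (\<forall>a. \<bar>real_of_int (walsh f a)\<bar> = 2 powr (real CARD('n) / 2))"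

definition EA_equivalent :: "(bit ^ 'n \<Rightarrow> bit) \<Rightarrow> (bit ^ 'n \<Rightarrow> bit) \<Rightarrow> bool" where
  "EA_equivalent f f' \<longleftrightarrow>
     (\<exists>(M :: bit ^ 'n ^ 'n) b a c. invertible M \<and>
        (\<forall>x. f x = f' (M *v x + b) + dotp a x + c))"

definition support :: "(bit ^ 'n \<Rightarrow> bit) \<Rightarrow> (bit ^ 'n) set" where
  "support f = {x. f x = 1}"

definition dev_incident :: "(bit ^ 'n \<Rightarrow> bit) \<Rightarrow> bit ^ 'n \<Rightarrow> bit ^ 'n \<Rightarrow> bool" where
  "dev_incident f x g \<longleftrightarrow> x \<in> (\<lambda>y. y + g) ` support f"

text \<open>Isomorphism M = P M' Q with permutation matrices P, Q: equivalently, a permutation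
  of points and a permutation of block indices transforming one incidence matrix into the other.\<close>
definition dev_isomorphic :: "(bit ^ 'n \<Rightarrow> bit) \<Rightarrow> (bit ^ 'n \<Rightarrow> bit) \<Rightarrow> bool" where
  "dev_isomorphic f f' \<longleftrightarrow>
     (\<exists>\<pi> \<rho>. bij \<pi> \<and> bij \<rho> \<and> (\<forall>x g. dev_incident f x g \<longleftrightarrow> dev_incident f' (\<pi> x) (\<rho> g)))"

text \<open>Coordinates x_1,...,x_10 are x $ 0, ..., x $ 9.\<close>
definition f5 :: "bit ^ 10 \<Rightarrow> bit" where
  "f5 x = x$0 * x$5 + x$1 * x$6 + x$2 * x$7 + x$3 * x$8 + x$4 * x$9
          + x$0 * x$1 * x$2 * x$3 * x$4"

definition f5' :: "bit ^ 10 \<Rightarrow> bit" where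
  "f5' x = f5 x + x$3 + x$5 + x$7 + x$9 + x$0 * x$1 + x$1 * x$2 + x$0 * x$1 * x$2
           + x$1 * x$3 * x$4 + x$0 * x$1 * x$3 * x$4 + x$1 * x$2 * x$3 * x$4"

end

theory Submission
  imports Defs
begin

text \<open>Write \<open>x = (x\<^sub>1, \<dots>, x\<^sub>5)\<close> and \<open>y = (x\<^sub>6, \<dots>, x\<^sub>1\<^sub>0)\<close>. Both functions are of
  Maiorana-McFarland type \<open>\<langle>x + c, y\<rangle> + g(x)\<close>, hence bent: the Walsh sum is linear in each
  \<open>y\<^sub>j\<close>, so summing out \<open>y\<close> leaves a single \<open>x\<close>.

  The designs are isomorphic via \<open>x \<mapsto> \<sigma>(x) + c\<close> on points and \<open>g \<mapsto> \<sigma>(g)\<close> on blocks, where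
  \<open>\<sigma>\<close> is linear plus quadratics \<open>(x\<^sub>a + 1)(x\<^sub>b + 1)\<close> in the \<open>y\<close>-part. Its linear part turns
  \<open>f'\<close> into \<open>f + z\<^sub>1z\<^sub>2z\<^sub>3\<close> with \<open>z = x + g\<close>, and this cubic is exactly what the quadratic parts
  of \<open>\<sigma>(x)\<close> and \<open>\<sigma>(g)\<close>, paired with \<open>z\<close>, contribute.

  They are not EA-equivalent because third derivatives \<open>D\<^sub>uD\<^sub>vD\<^sub>w\<close> ignore quadratic
  and affine terms and transform linearly under EA-equivalence. For \<open>f\<close> they vanish
  identically exactly when \<open>u\<close> has zero \<open>x\<close>-part, for \<open>f'\<close> at least then, so the linear part of an
  equivalence preserves that subspace. This turns \<open>x\<^sub>1\<cdots>x\<^sub>5\<close>, the indicator of a coset of it,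
  into the indicator of another coset, and \<open>f'\<close> would agree with such an indicator up to
  quadratic terms, which one third derivative of \<open>f'\<close> refutes.\<close>

declare add_bit_eq_xor[simp del] mult_bit_eq_and[simp del]

instance bit :: finite
proof
  show "finite (UNIV :: bit set)"
    by (rule finite_subset[of _ "{0, 1}"]) (auto intro: bit.exhaust)
qed

lemma bit_add_self [simp]: "(x :: bit) + x = 0"
  by (cases x) simp_all

lemma vec_bit_add_self [simp]: "(p :: bit ^ 'n) + q + q = p"
  by (simp add: vec_eq_iff add.assoc)

lemma bit_add3_eq_0_iff: "(x :: bit) + y + z = 0 \<longleftrightarrow> x = y + z"
  by (cases x; cases y; cases z) simp_all

lemma bit_eq_if_eq_1_iff: "(a = 1 \<longleftrightarrow> b = 1) \<Longrightarrow> (a :: bit) = b"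
  by (cases a; cases b) simp_all

lemma sgn_bit_add_one: "sgn_bit (b + 1) = - sgn_bit b"
  by (cases b) (simp_all add: sgn_bit_def)

lemma dotp_add: "dotp a (p + q) = dotp a p + dotp a q"
  by (simp add: dotp_def distrib_left sum.distrib)

lemma dotp_axis: "dotp a (axis j 1) = a $ j"
  by (simp add: dotp_def axis_def if_distrib cong: if_cong)

lemma sum_split_bit:
  fixes h :: "bit ^ 'n \<Rightarrow> 'b :: comm_monoid_add" and C :: "bit ^ 'n \<Rightarrow> bit"
  shows "(\<Sum>p\<in>{p. P p}. h p) = (\<Sum>p\<in>{p. P p \<and> C p = 0}. h p) + (\<Sum>p\<in>{p. P p \<and> C p = 1}. h p)"
proof -
  have "{p. P p} = {p. P p \<and> C p = 0} \<union> {p. P p \<and> C p = 1}"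
  proof (rule set_eqI)
    show "p \<in> {p. P p} \<longleftrightarrow> p \<in> {p. P p \<and> C p = 0} \<union> {p. P p \<and> C p = 1}" for p
      by (cases "C p") auto
  qed
  moreover have "{p. P p \<and> C p = 0} \<inter> {p. P p \<and> C p = 1} = {}" by auto
  ultimately show ?thesis by (simp add: sum.union_disjoint)
qed

lemma sum_sgn_bit_linear_coordinate:
  fixes Phi C :: "bit ^ 'n \<Rightarrow> bit"
  assumes P: "\<And>p. P (p + axis j 1) = P p" and C: "\<And>p. C (p + axis j 1) = C p"
    and Phi: "\<And>p. Phi (p + axis j 1) = Phi p + C p"
  shows "(\<Sum>p\<in>{p. P p}. sgn_bit (Phi p)) = (\<Sum>p\<in>{p. P p \<and> C p = 0}. sgn_bit (Phi p))"
proof -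
  let ?S = "{p. P p \<and> C p = 1}"
  have "(\<Sum>p\<in>?S. sgn_bit (Phi p)) = (\<Sum>p\<in>?S. sgn_bit (Phi (p + axis j 1)))"
    by (rule sum.reindex_bij_witness[where i="\<lambda>p. p + axis j 1" and j="\<lambda>p. p + axis j 1"])
      (auto simp: P C)
  also have "\<dots> = - (\<Sum>p\<in>?S. sgn_bit (Phi p))"
    by (simp add: Phi sgn_bit_add_one sum_negf)
  finally have "(\<Sum>p\<in>?S. sgn_bit (Phi p)) = 0"
    by linarith
  then show ?thesis
    using sum_split_bit[where P=P and h="\<lambda>p. sgn_bit (Phi p)" and C=C] by simp
qed

lemma sum_sgn_bit_linear_coordinates:
  fixes Phi :: "bit ^ 'n \<Rightarrow> bit" and C :: "'n \<Rightarrow> bit ^ 'n \<Rightarrow> bit"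
  assumes "\<And>p k. k \<in> set js \<Longrightarrow> P (p + axis k 1) = P p"
    and "\<And>p j k. j \<in> set js \<Longrightarrow> k \<in> set js \<Longrightarrow> C j (p + axis k 1) = C j p"
    and "\<And>p j. j \<in> set js \<Longrightarrow> Phi (p + axis j 1) = Phi p + C j p"
  shows "(\<Sum>p\<in>{p. P p}. sgn_bit (Phi p))
    = (\<Sum>p\<in>{p. P p \<and> (\<forall>j\<in>set js. C j p = 0)}. sgn_bit (Phi p))"
  using assms
proof (induction js arbitrary: P)
  case (Cons j js)
  have "(\<Sum>p\<in>{p. P p}. sgn_bit (Phi p)) = (\<Sum>p\<in>{p. P p \<and> C j p = 0}. sgn_bit (Phi p))"
    by (rule sum_sgn_bit_linear_coordinate[where j=j]) (simp_all add: Cons.prems)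
  also have "\<dots> = (\<Sum>p\<in>{p. (P p \<and> C j p = 0) \<and> (\<forall>j\<in>set js. C j p = 0)}. sgn_bit (Phi p))"
    by (rule Cons.IH) (simp_all add: Cons.prems)
  finally show ?case by (simp add: conj_assoc)
qed simp

lemma sum_invariant_coordinate:
  fixes h :: "bit ^ 'n \<Rightarrow> 'b :: comm_semiring_1"
  assumes P: "\<And>p. P (p + axis j 1) = P p" and h: "\<And>p. P p \<Longrightarrow> h (p + axis j 1) = h p"
  shows "(\<Sum>p\<in>{p. P p}. h p) = 2 * (\<Sum>p\<in>{p. P p \<and> p $ j = 0}. h p)"
proof -
  have "(\<Sum>p\<in>{p. P p \<and> p $ j = 1}. h p) = (\<Sum>p\<in>{p. P p \<and> p $ j = 0}. h (p + axis j 1))"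
    by (rule sum.reindex_bij_witness[where i="\<lambda>p. p + axis j 1" and j="\<lambda>p. p + axis j 1"])
      (auto simp: P)
  also have "\<dots> = (\<Sum>p\<in>{p. P p \<and> p $ j = 0}. h p)"
    by (simp add: h)
  finally have "(\<Sum>p\<in>{p. P p \<and> p $ j = 1}. h p) = (\<Sum>p\<in>{p. P p \<and> p $ j = 0}. h p)" .
  moreover note sum_split_bit[where P=P and h=h and C="\<lambda>p. p $ j"]
  ultimately show ?thesis
    by (simp only: mult_2)
qed

lemma sum_invariant_coordinates:
  fixes h :: "bit ^ 'n \<Rightarrow> 'b :: comm_semiring_1"
  assumes "distinct js"
    and "\<And>p k. k \<in> set js \<Longrightarrow> P (p + axis k 1) = P p"
    and "\<And>p k. k \<in> set js \<Longrightarrow> P p \<Longrightarrow> h (p + axis k 1) = h p"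
  shows "(\<Sum>p\<in>{p. P p}. h p) = 2 ^ length js * (\<Sum>p\<in>{p. P p \<and> (\<forall>j\<in>set js. p $ j = 0)}. h p)"
  using assms
proof (induction js arbitrary: P)
  case (Cons j js)
  have halve: "(\<Sum>p\<in>{p. P p}. h p) = 2 * (\<Sum>p\<in>{p. P p \<and> p $ j = 0}. h p)"
    by (rule sum_invariant_coordinate[where j=j]) (simp_all add: Cons.prems)
  have IH: "(\<Sum>p\<in>{p. P p \<and> p $ j = 0}. h p)
      = 2 ^ length js * (\<Sum>p\<in>{p. (P p \<and> p $ j = 0) \<and> (\<forall>j\<in>set js. p $ j = 0)}. h p)"
    using Cons.prems by (intro Cons.IH) (auto simp: axis_def)
  have "{p. (P p \<and> p $ j = 0) \<and> (\<forall>j\<in>set js. p $ j = 0)}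
      = {p. P p \<and> (\<forall>j\<in>set (j # js). p $ j = 0)}"
    by auto
  then show ?case
    unfolding halve IH by (simp only: length_Cons power_Suc mult.assoc)
qed simp

lemma UNIV_10: "(UNIV :: 10 set) = {0, 1, 2, 3, 4, 5, 6, 7, 8, 9}"
proof -
  have Abs_bit0_of_int: "Abs_bit0 k = (of_int k :: 10)" if "0 \<le> k" "k < 10" for k
    using that by (simp add: bit0.of_int_eq)
  show ?thesis
    unfolding UNIV_enum
    apply (simp add: enum_bit0_def enum_bit1_def Abs_bit0'_def Abs_bit1'_def upt_rec)
    apply (simp add: Abs_bit0_of_int del: of_int_numeral)
    apply simp
    done
qed

lemma all_10: "(\<forall>i :: 10. P i) \<longleftrightarrow> P 0 \<and> P 1 \<and> P 2 \<and> P 3 \<and> P 4 \<and> P 5 \<and> P 6 \<and> P 7 \<and> P 8 \<and> P 9"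
  by (metis UNIV_10 UNIV_I insertE empty_iff)

lemma vec10_eq_iff:
  "p = q \<longleftrightarrow> p$0 = q$0 \<and> p$1 = q$1 \<and> p$2 = q$2 \<and> p$3 = q$3 \<and> p$4 = q$4 \<and>
     p$5 = q$5 \<and> p$6 = q$6 \<and> p$7 = q$7 \<and> p$8 = q$8 \<and> p$9 = q$9"
  for p q :: "'a ^ 10"
  unfolding vec_eq_iff all_10 ..

definition vec10 :: "'a \<Rightarrow> 'a \<Rightarrow> 'a \<Rightarrow> 'a \<Rightarrow> 'a \<Rightarrow> 'a \<Rightarrow> 'a \<Rightarrow> 'a \<Rightarrow> 'a \<Rightarrow> 'a \<Rightarrow> 'a ^ 10" where
  "vec10 a0 a1 a2 a3 a4 a5 a6 a7 a8 a9 = (\<chi> i. if i = 0 then a0 else if i = 1 then a1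
     else if i = 2 then a2 else if i = 3 then a3 else if i = 4 then a4 else if i = 5 then a5
     else if i = 6 then a6 else if i = 7 then a7 else if i = 8 then a8 else a9)"

lemma vec10_nth [simp]:
  "vec10 a0 a1 a2 a3 a4 a5 a6 a7 a8 a9 $ 0 = a0"
  "vec10 a0 a1 a2 a3 a4 a5 a6 a7 a8 a9 $ 1 = a1"
  "vec10 a0 a1 a2 a3 a4 a5 a6 a7 a8 a9 $ 2 = a2"
  "vec10 a0 a1 a2 a3 a4 a5 a6 a7 a8 a9 $ 3 = a3"
  "vec10 a0 a1 a2 a3 a4 a5 a6 a7 a8 a9 $ 4 = a4"
  "vec10 a0 a1 a2 a3 a4 a5 a6 a7 a8 a9 $ 5 = a5"
  "vec10 a0 a1 a2 a3 a4 a5 a6 a7 a8 a9 $ 6 = a6"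
  "vec10 a0 a1 a2 a3 a4 a5 a6 a7 a8 a9 $ 7 = a7"
  "vec10 a0 a1 a2 a3 a4 a5 a6 a7 a8 a9 $ 8 = a8"
  "vec10 a0 a1 a2 a3 a4 a5 a6 a7 a8 a9 $ 9 = a9"
  by (simp_all add: vec10_def)

lemma axis_nth_if: "axis j x $ i = (if i = j then x else 0)"
  by (simp add: axis_def)

text \<open>Coordinates \<open>0..4\<close> form \<open>x\<close> and \<open>5..9\<close> form \<open>y\<close>; only \<open>c $ 0, \<dots>, c $ 4\<close> matter.
  Indices live in the ring \<open>10\<close>, so \<open>j - 5\<close> below is the \<open>x\<close>-partner of \<open>y\<close>-coordinate \<open>j\<close>.\<close>

definition maiorana_mcfarland :: "bit ^ 10 \<Rightarrow> (bit ^ 10 \<Rightarrow> bit) \<Rightarrow> bit ^ 10 \<Rightarrow> bit" where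
  "maiorana_mcfarland c g p = (p$0 + c$0) * p$5 + (p$1 + c$1) * p$6 + (p$2 + c$2) * p$7
     + (p$3 + c$3) * p$8 + (p$4 + c$4) * p$9 + g p"

lemma maiorana_mcfarland_add_axis:
  assumes "j \<in> {5, 6, 7, 8, 9}" and "g (p + axis j 1) = g p"
  shows "maiorana_mcfarland c g (p + axis j 1) = maiorana_mcfarland c g p + (p $ (j - 5) + c $ (j - 5))"
proof -
  from assms(1) have "j = 5 \<or> j = 6 \<or> j = 7 \<or> j = 8 \<or> j = 9"
    by simp
  then show ?thesis
    using assms(2) unfolding maiorana_mcfarland_def
    by (elim disjE) (simp_all add: axis_nth_if distrib_left)
qed

lemma walsh_maiorana_mcfarland:
  assumes g: "\<And>p j. j \<in> {5, 6, 7, 8, 9} \<Longrightarrow> g (p + axis j 1) = g p"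
  shows "\<bar>walsh (maiorana_mcfarland c g) a\<bar> = 32"
proof -
  define Phi where "Phi p = maiorana_mcfarland c g p + dotp a p" for p
  define C where "C j p = p $ (j - 5) + c $ (j - 5) + a $ j" for j :: 10 and p :: "bit ^ 10"
  define d where "d = vec10 (c$0 + a$5) (c$1 + a$6) (c$2 + a$7) (c$3 + a$8) (c$4 + a$9) 0 0 0 0 0"
  let ?Y = "[5, 6, 7, 8, 9] :: 10 list"
  have C_flip: "C j (p + axis k 1) = C j p" if "j \<in> set ?Y" "k \<in> set ?Y" for j k p
    using that by (auto simp: C_def axis_nth_if)
  have Phi_flip: "Phi (p + axis j 1) = Phi p + C j p" if "j \<in> set ?Y" for j p
    using that g[of j p] maiorana_mcfarland_add_axis[of j g p c]
    by (simp add: Phi_def C_def dotp_add dotp_axis ac_simps)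
  have Phi_invariant: "Phi (p + axis k 1) = Phi p"
    if "k \<in> set ?Y" and "\<forall>j\<in>set ?Y. C j p = 0" for k p
    using Phi_flip[OF that(1)] bspec[OF that(2,1)] by simp
  have "walsh (maiorana_mcfarland c g) a = (\<Sum>p\<in>{p. True}. sgn_bit (Phi p))"
    by (simp add: walsh_def Phi_def)
  also have "\<dots> = (\<Sum>p\<in>{p. True \<and> (\<forall>j\<in>set ?Y. C j p = 0)}. sgn_bit (Phi p))"
    by (rule sum_sgn_bit_linear_coordinates) (simp_all add: C_flip Phi_flip)
  also have "\<dots> = 2 ^ length ?Y * (\<Sum>p\<in>{p. (True \<and> (\<forall>j\<in>set ?Y. C j p = 0))
      \<and> (\<forall>j\<in>set ?Y. p $ j = 0)}. sgn_bit (Phi p))"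
    by (rule sum_invariant_coordinates) (simp_all add: C_flip Phi_invariant)
  also have "{p. (True \<and> (\<forall>j\<in>set ?Y. C j p = 0)) \<and> (\<forall>j\<in>set ?Y. p $ j = 0)} = {d}"
  proof (intro set_eqI iffI)
    fix p
    assume "p \<in> {p. (True \<and> (\<forall>j\<in>set ?Y. C j p = 0)) \<and> (\<forall>j\<in>set ?Y. p $ j = 0)}"
    then show "p \<in> {d}"
      by (simp add: C_def d_def vec10_eq_iff bit_add3_eq_0_iff)
  qed (simp add: C_def d_def bit_add3_eq_0_iff)
  finally show ?thesis
    by (cases "Phi d") (simp_all add: sgn_bit_def)
qed

lemma bent_iff_abs_walsh:
  fixes f :: "bit ^ 'n \<Rightarrow> bit"
  assumes "even CARD('n)"
  shows "bent f \<longleftrightarrow> (\<forall>a. \<bar>walsh f a\<bar> = 2 ^ (CARD('n) div 2))"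
proof -
  from assms have "real CARD('n) / 2 = real (CARD('n) div 2)"
    by (auto elim: evenE)
  then have "2 powr (real CARD('n) / 2) = real_of_int (2 ^ (CARD('n) div 2))"
    by (simp add: powr_realpow)
  then show ?thesis
    unfolding bent_def of_int_abs [symmetric] of_int_eq_iff by presburger
qed

lemma add_y_axis_nth_x:
  assumes "j \<in> {5, 6, 7, 8, 9}" and "i \<in> {0, 1, 2, 3, 4}"
  shows "((p :: bit ^ 10) + axis j 1) $ i = p $ i"
  using assms by (auto simp: axis_nth_if)

definition g5 :: "bit ^ 10 \<Rightarrow> bit" where
  "g5 p = p$0 * p$1 * p$2 * p$3 * p$4"

definition g5' :: "bit ^ 10 \<Rightarrow> bit" where
  "g5' p = p$0 * p$1 * p$2 * p$3 * p$4 + p$3 + p$0 * p$1 + p$1 * p$2 + p$0 * p$1 * p$2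
     + p$1 * p$3 * p$4 + p$0 * p$1 * p$3 * p$4 + p$1 * p$2 * p$3 * p$4"

definition c5' :: "bit ^ 10" where
  "c5' = vec10 1 0 1 0 1 0 0 0 0 0"

lemma f5_eq_maiorana_mcfarland: "f5 = maiorana_mcfarland 0 g5"
proof
  show "f5 p = maiorana_mcfarland 0 g5 p" for p
    unfolding f5_def maiorana_mcfarland_def g5_def zero_index by algebra
qed

lemma f5'_eq_maiorana_mcfarland: "f5' = maiorana_mcfarland c5' g5'"
proof
  show "f5' p = maiorana_mcfarland c5' g5' p" for p
    unfolding f5'_def f5_def maiorana_mcfarland_def g5'_def c5'_def vec10_nth by algebra
qed

lemma bent_f5: "bent f5"
proof -
  have "\<bar>walsh (maiorana_mcfarland 0 g5) a\<bar> = 32" for a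
    by (rule walsh_maiorana_mcfarland) (simp add: g5_def add_y_axis_nth_x del: vector_add_component)
  then show ?thesis
    by (simp add: bent_iff_abs_walsh f5_eq_maiorana_mcfarland)
qed

lemma bent_f5': "bent f5'"
proof -
  have "\<bar>walsh (maiorana_mcfarland c5' g5') a\<bar> = 32" for a
    by (rule walsh_maiorana_mcfarland) (simp add: g5'_def add_y_axis_nth_x del: vector_add_component)
  then show ?thesis
    by (simp add: bent_iff_abs_walsh f5'_eq_maiorana_mcfarland)
qed

lemma dev_incident_iff: "dev_incident f x g \<longleftrightarrow> f (x + g) = 1"
  for f :: "bit ^ 'n \<Rightarrow> bit"
  unfolding dev_incident_def support_def image_iff
  by (metis (mono_tags, lifting) mem_Collect_eq vec_bit_add_self)

lemma dev_isomorphicI: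
  fixes f f' :: "bit ^ 'n \<Rightarrow> bit"
  assumes "bij \<pi>" and "bij \<rho>" and "\<And>x g. f' (\<pi> x + \<rho> g) = f (x + g)"
  shows "dev_isomorphic f f'"
  unfolding dev_isomorphic_def dev_incident_iff using assms by metis

definition quad :: "bit \<Rightarrow> bit \<Rightarrow> bit" where
  "quad a b = (a + 1) * (b + 1)"

definition shear :: "bit ^ 10 \<Rightarrow> bit ^ 10" where
  "shear x = vec10 (x$0) (x$1) (x$2) (x$3) (x$4 + x$0) (x$5 + x$9 + quad (x$1) (x$2))
     (x$6 + quad (x$0) (x$2)) (x$7 + quad (x$0) (x$1)) (x$8) (x$9)"

lemma inj_shear: "inj shear"
proof (rule injI)
  fix x y
  assume "shear x = shear y"
  then have eq: "shear x $ k = shear y $ k" for k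
    by simp
  have x_part: "x$0 = y$0" "x$1 = y$1" "x$2 = y$2" "x$3 = y$3" "x$8 = y$8" "x$9 = y$9"
    using eq[of 0] eq[of 1] eq[of 2] eq[of 3] eq[of 8] eq[of 9] by (simp_all add: shear_def)
  moreover have "x$4 = y$4" "x$5 = y$5" "x$6 = y$6" "x$7 = y$7"
    using eq[of 4] eq[of 5] eq[of 6] eq[of 7] x_part by (simp_all add: shear_def)
  ultimately show "x = y"
    by (simp add: vec10_eq_iff)
qed

lemma bij_shear: "bij shear"
  using inj_shear finite_UNIV_inj_surj[of shear] by (simp add: bij_def)

lemma cube_eq_sum_of_quads:
  fixes x0 x1 x2 a0 a1 a2 :: bit
  shows "(x0 + a0) * (quad x1 x2 + quad a1 a2) + (x1 + a1) * (quad x0 x2 + quad a0 a2)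
    + (x2 + a2) * (quad x0 x1 + quad a0 a1) = (x0 + a0) * (x1 + a1) * (x2 + a2)"
  unfolding quad_def by (cases x0; cases x1; cases x2; cases a0; cases a1; cases a2) simp_all

lemma g5'_shifted:
  fixes z0 z1 z2 z3 z4 :: bit
  shows "g5' (vec10 (z0 + 1) z1 (z2 + 1) z3 (z4 + z0 + 1) y5 y6 y7 y8 y9)
    = z0 * z1 * z2 * z3 * z4 + z1 + z3 + z0 * z1 * z2"
  unfolding g5'_def vec10_nth by (cases z0; cases z1; cases z2; cases z3; cases z4) simp_all

lemma f5'_shear_translate:
  "f5' (shear p + shear g + vec10 1 0 1 0 1 0 1 0 1 0) = f5 (p + g)"
proof -
  define z where "z = p + g"
  define Q0 where "Q0 = quad (p$1) (p$2) + quad (g$1) (g$2)"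
  define Q1 where "Q1 = quad (p$0) (p$2) + quad (g$0) (g$2)"
  define Q2 where "Q2 = quad (p$0) (p$1) + quad (g$0) (g$1)"
  have w: "shear p + shear g + vec10 1 0 1 0 1 0 1 0 1 0
    = vec10 (z$0 + 1) (z$1) (z$2 + 1) (z$3) (z$4 + z$0 + 1) (z$5 + z$9 + Q0) (z$6 + Q1 + 1)
        (z$7 + Q2) (z$8 + 1) (z$9)"
    by (simp add: vec10_eq_iff shear_def z_def Q0_def Q1_def Q2_def ac_simps)
  have Q: "z$0 * Q0 + z$1 * Q1 + z$2 * Q2 = z$0 * z$1 * z$2"
    unfolding z_def Q0_def Q1_def Q2_def vector_add_component by (rule cube_eq_sum_of_quads)
  note g5' = g5'_shifted[of "z$0" "z$1" "z$2" "z$3" "z$4"]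
  \<comment> \<open>\<open>algebra\<close> works over all commutative rings, so the characteristic-2 cancellation
    is exposed as a multiple of 2.\<close>
  have "f5' (shear p + shear g + vec10 1 0 1 0 1 0 1 0 1 0)
      = f5 z + 2 * (z$0 * z$1 * z$2 + z$0 * z$9 + z$1 + z$3 + z$5 + z$7 + 2 * z$9 + Q0 + Q2)"
    unfolding w f5'_eq_maiorana_mcfarland maiorana_mcfarland_def c5'_def vec10_nth g5' f5_def
    using Q by algebra
  then show ?thesis
    by (simp add: z_def)
qed

lemma dev_isomorphic_f5_f5': "dev_isomorphic f5 f5'"
proof (rule dev_isomorphicI)
  let ?c = "vec10 1 0 1 0 1 0 1 0 1 0 :: bit ^ 10"
  show "bij (\<lambda>x. shear x + ?c)"
    using bij_shear bij_comp[of shear "\<lambda>x. x + ?c"] by (simp add: o_def bij_plus_right)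
  show "bij shear"
    by (rule bij_shear)
  show "f5' (shear x + ?c + shear g) = f5 (x + g)" for x g
    using f5'_shear_translate[of x g] by (simp add: ac_simps)
qed

definition third_derivative ::
    "(bit ^ 'n \<Rightarrow> bit) \<Rightarrow> bit ^ 'n \<Rightarrow> bit ^ 'n \<Rightarrow> bit ^ 'n \<Rightarrow> bit ^ 'n \<Rightarrow> bit" where
  "third_derivative F u v w x = F x + F (x + u) + F (x + v) + F (x + w) + F (x + u + v)
     + F (x + u + w) + F (x + v + w) + F (x + u + v + w)"

lemma third_derivative_add:
  "third_derivative (\<lambda>y. F y + G y) u v w x = third_derivative F u v w x + third_derivative G u v w x"
  unfolding third_derivative_def by algebra

lemma third_derivative_quadratic: "third_derivative (\<lambda>y. (y $ i + c) * y $ j) u v w x = 0"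
proof -
  have "third_derivative (\<lambda>y. (y $ i + c) * y $ j) u v w x
    = 2 * (4 * x$i * x$j + 2 * x$i * (u$j + v$j + w$j) + 2 * (u$i + v$i + w$i) * x$j
      + 2 * (u$i * u$j + v$i * v$j + w$i * w$j)
      + (u$i * v$j + u$i * w$j + v$i * u$j + v$i * w$j + w$i * u$j + w$i * v$j)
      + 4 * c * x$j + 2 * c * (u$j + v$j + w$j))"
    unfolding third_derivative_def vector_add_component by algebra
  then show ?thesis
    by simp
qed

lemma third_derivative_maiorana_mcfarland:
  "third_derivative (maiorana_mcfarland c g) u v w x = third_derivative g u v w x"
proof -
  have "maiorana_mcfarland c g = (\<lambda>y. (y$0 + c$0) * y$5 + (y$1 + c$1) * y$6 + (y$2 + c$2) * y$7
      + (y$3 + c$3) * y$8 + (y$4 + c$4) * y$9 + g y)"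
    by (rule ext) (simp add: maiorana_mcfarland_def)
  then show ?thesis
    by (simp only: third_derivative_add third_derivative_quadratic add_0_left)
qed

lemma third_derivative_affine_comp:
  "third_derivative (\<lambda>y. G (M *v y + b)) u v w x
    = third_derivative G (M *v u) (M *v v) (M *v w) (M *v x + b)"
  unfolding third_derivative_def by (simp add: matrix_vector_right_distrib ac_simps)

lemma third_derivative_add_affine:
  "third_derivative (\<lambda>y. G y + dotp a y + c) u v w x = third_derivative G u v w x"
proof -
  have "third_derivative (\<lambda>y. G y + dotp a y + c) u v w x
    = third_derivative G u v w x + 2 * (4 * dotp a x + 2 * dotp a u + 2 * dotp a v + 2 * dotp a w + 4 * c)"
    unfolding third_derivative_def dotp_add by algebra
  then show ?thesis
    by simp
qed

lemma third_derivative_EA: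
  assumes "\<And>x. f x = f' (M *v x + b) + dotp a x + c"
  shows "third_derivative f u v w x = third_derivative f' (M *v u) (M *v v) (M *v w) (M *v x + b)"
proof -
  have "f = (\<lambda>y. f' (M *v y + b) + dotp a y + c)"
    using assms by blast
  then show ?thesis
    by (simp only: third_derivative_add_affine third_derivative_affine_comp)
qed

lemma third_derivative_periodic:
  assumes "\<And>y. F (y + t) = F y"
  shows "third_derivative F t v w x = 0"
proof -
  have shifts: "F (x + t) = F x" "F (x + t + v) = F (x + v)" "F (x + t + w) = F (x + w)"
    "F (x + t + v + w) = F (x + v + w)"
    using assms[of x] assms[of "x + v"] assms[of "x + w"] assms[of "x + v + w"]
    by (simp_all add: ac_simps)
  have "third_derivative F t v w x = 2 * (F x + F (x + v) + F (x + w) + F (x + v + w))"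
    unfolding third_derivative_def shifts by algebra
  then show ?thesis
    by simp
qed

definition x_part_zero :: "bit ^ 10 \<Rightarrow> bool" where
  "x_part_zero y \<longleftrightarrow> y$0 = 0 \<and> y$1 = 0 \<and> y$2 = 0 \<and> y$3 = 0 \<and> y$4 = 0"

lemma third_derivative_g5'_x_part_zero: "x_part_zero t \<Longrightarrow> third_derivative g5' t v w x = 0"
  by (rule third_derivative_periodic) (simp add: g5'_def x_part_zero_def)

definition one_x :: "bit ^ 10" where
  "one_x = vec10 1 1 1 1 1 0 0 0 0 0"

lemma x_part_zero_if_third_derivative_g5_vanishes:
  assumes "\<And>v w x. third_derivative g5 u v w x = 0"
  shows "x_part_zero u"
proof (rule ccontr)
  assume "\<not> x_part_zero u"
  then consider "u$0 = 1 \<or> u$1 = 1 \<or> u$2 = 1" | "u$2 = 1 \<or> u$3 = 1 \<or> u$4 = 1"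
    unfolding x_part_zero_def by auto
  \<comment> \<open>\<open>D\<^sub>e\<^sub>3D\<^sub>e\<^sub>4g5 = x\<^sub>0x\<^sub>1x\<^sub>2\<close>, whose derivative along \<open>u\<close> at the all-ones \<open>x\<close> is 1 unless
    \<open>u\<^sub>0 = u\<^sub>1 = u\<^sub>2 = 0\<close>; symmetrically with \<open>e\<^sub>0, e\<^sub>1\<close>.\<close>
  then show False
  proof cases
    case 1
    then have "third_derivative g5 u (axis 3 1) (axis 4 1) one_x = 1"
      unfolding third_derivative_def g5_def one_x_def
      by (cases "u$0"; cases "u$1"; cases "u$2"; simp add: axis_nth_if)
    with assms show False by simp
  next
    case 2
    then have "third_derivative g5 u (axis 0 1) (axis 1 1) one_x = 1"
      unfolding third_derivative_def g5_def one_x_def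
      by (cases "u$2"; cases "u$3"; cases "u$4"; simp add: axis_nth_if)
    with assms show False by simp
  qed
qed

definition flat_indicator :: "bit ^ 10 \<Rightarrow> bit ^ 10 \<Rightarrow> bit" where
  "flat_indicator p y = (y$0 + p$0 + 1) * (y$1 + p$1 + 1) * (y$2 + p$2 + 1) * (y$3 + p$3 + 1)
     * (y$4 + p$4 + 1)"

lemma bit_prod5_eq_1_iff:
  "(a * b * c * d * e = (1 :: bit)) \<longleftrightarrow> a = 1 \<and> b = 1 \<and> c = 1 \<and> d = 1 \<and> e = 1"
  by (cases a; cases b; cases c; cases d; cases e) simp_all

lemma flat_indicator_eq_1_iff: "flat_indicator p y = 1 \<longleftrightarrow> x_part_zero (y + p)"
  unfolding flat_indicator_def x_part_zero_def bit_prod5_eq_1_iff by simp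

lemma g5_eq_flat_indicator: "g5 = flat_indicator one_x"
  by (rule ext) (simp add: g5_def flat_indicator_def one_x_def add.assoc)

lemma third_derivative_g5'_ne_flat_indicator:
  "\<exists>x. third_derivative g5' (axis 0 1) (axis 1 1) (axis 2 1) x
     \<noteq> third_derivative (flat_indicator p) (axis 0 1) (axis 1 1) (axis 2 1) x"
proof -
  have g5': "third_derivative g5' (axis 0 1) (axis 1 1) (axis 2 1) 0 = 1"
    "third_derivative g5' (axis 0 1) (axis 1 1) (axis 2 1) (axis 3 1) = 1"
    unfolding third_derivative_def g5'_def by (simp_all add: axis_nth_if)
  have flat: "third_derivative (flat_indicator p) (axis 0 1) (axis 1 1) (axis 2 1) 0
      = (p$3 + 1) * (p$4 + 1)"
    "third_derivative (flat_indicator p) (axis 0 1) (axis 1 1) (axis 2 1) (axis 3 1) = p$3 * (p$4 + 1)"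
    unfolding third_derivative_def flat_indicator_def
    by (cases "p$0"; cases "p$1"; cases "p$2"; cases "p$3"; cases "p$4"; simp add: axis_nth_if)+
  show ?thesis
  proof (cases "p$3 = 0")
    case True
    then show ?thesis using g5'(2) flat(2) by (intro exI[of _ "axis 3 1"]) simp
  next
    case False
    then show ?thesis using g5'(1) flat(1) by (intro exI[of _ 0]) simp
  qed
qed

lemma x_part_zero_matrix_iff:
  fixes M N :: "bit ^ 10 ^ 10"
  assumes D3: "\<And>u v w x. third_derivative g5 u v w x
      = third_derivative g5' (M *v u) (M *v v) (M *v w) (M *v x + b)"
    and MN: "M ** N = mat 1"
  shows "x_part_zero (M *v u) \<longleftrightarrow> x_part_zero u"
proof
  have x_part_zero_back: "x_part_zero u" if "x_part_zero (M *v u)" for u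
    by (rule x_part_zero_if_third_derivative_g5_vanishes)
      (simp add: D3 third_derivative_g5'_x_part_zero that)
  then show "x_part_zero (M *v u) \<Longrightarrow> x_part_zero u" .
  have MN_v: "M *v (N *v y) = y" for y
    by (simp add: matrix_vector_mul_assoc MN)
  let ?V = "{y. x_part_zero y}"
  have "(*v) N ` ?V \<subseteq> ?V"
    using x_part_zero_back MN_v by auto
  moreover have "inj_on ((*v) N) ?V"
    by (metis MN_v inj_onI)
  ultimately have "(*v) N ` ?V = ?V"
    by (intro endo_inj_surj) simp_all
  then show "x_part_zero u \<Longrightarrow> x_part_zero (M *v u)"
    using MN_v by (metis (mono_tags, lifting) image_iff mem_Collect_eq)
qed

lemma g5_eq_flat_indicator_affine:
  fixes M N :: "bit ^ 10 ^ 10"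
  assumes D3: "\<And>u v w x. third_derivative g5 u v w x
      = third_derivative g5' (M *v u) (M *v v) (M *v w) (M *v x + b)"
    and MN: "M ** N = mat 1"
  shows "g5 y = flat_indicator (M *v one_x + b) (M *v y + b)"
proof -
  have "M *v y + b + (M *v one_x + b) = M *v y + M *v one_x + b + b"
    by (simp add: ac_simps)
  also have "\<dots> = M *v (y + one_x)"
    by (simp add: matrix_vector_right_distrib)
  finally have "g5 y = 1 \<longleftrightarrow> flat_indicator (M *v one_x + b) (M *v y + b) = 1"
    by (simp only: g5_eq_flat_indicator flat_indicator_eq_1_iff x_part_zero_matrix_iff[OF D3 MN])
  then show ?thesis
    by (rule bit_eq_if_eq_1_iff)
qed

lemma not_EA_equivalent_f5_f5': "\<not> EA_equivalent f5 f5'"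
proof
  assume "EA_equivalent f5 f5'"
  then obtain M :: "bit ^ 10 ^ 10" and b a c where "invertible M"
    and f5: "\<And>x. f5 x = f5' (M *v x + b) + dotp a x + c"
    unfolding EA_equivalent_def by blast
  then obtain N where MN: "M ** N = mat 1"
    unfolding invertible_def by blast
  have MN_v: "M *v (N *v y) = y" for y
    by (simp add: matrix_vector_mul_assoc MN)
  have D3: "third_derivative g5 u v w x
      = third_derivative g5' (M *v u) (M *v v) (M *v w) (M *v x + b)" for u v w x
    using third_derivative_EA[OF f5, of u v w x]
    by (simp add: f5_eq_maiorana_mcfarland f5'_eq_maiorana_mcfarland
        third_derivative_maiorana_mcfarland)
  define p where "p = M *v one_x + b"
  have g5_affine: "g5 = (\<lambda>y. flat_indicator p (M *v y + b))"
    unfolding p_def by (rule ext) (rule g5_eq_flat_indicator_affine[OF D3 MN])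
  have "third_derivative g5' t1 t2 t3 t4 = third_derivative (flat_indicator p) t1 t2 t3 t4"
    for t1 t2 t3 t4
  proof -
    have "third_derivative g5' t1 t2 t3 t4
        = third_derivative g5 (N *v t1) (N *v t2) (N *v t3) (N *v (t4 + b))"
      by (simp add: D3 MN_v)
    also have "\<dots> = third_derivative (flat_indicator p) t1 t2 t3 t4"
      unfolding g5_affine third_derivative_affine_comp by (simp add: MN_v)
    finally show ?thesis .
  qed
  with third_derivative_g5'_ne_flat_indicator show False
    by blast
qed

theorem mainTheorem5:
  shows "bent f5 \<and> bent f5' \<and> \<not> EA_equivalent f5 f5' \<and> dev_isomorphic f5 f5'"
  using bent_f5 bent_f5' not_EA_equivalent_f5_f5' dev_isomorphic_f5_f5' by blast

end
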